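(* In the setting and under the assumptions (P1), (A0)–(A3) of the mediational g-formula, with $A$ real-valued taking values $a,a^*$, suppose additionally: (H1) there are a locally integrable function $s\mapsto\rho_s$ and a function $\lambda_1$ such that for all $i\ge0$, all $t_i\le t\le t_{i+1}$, all $\overline m_i,\overline c_i$ and $j\in\{a,a^*\}$, $$P(T>t\mid T>t_i,\overline M_i=\overline m_i,\overline C_i=\overline c_i,A=j)=\exp\Big\{-\int_{t_i}^t\big(\rho_s j+\lambda_1(s\mid\overline m_i,\overline c_i)\big)\,ds\Big\};$$ (H2) the covariate factors do not depend on treatment: $P(C_i=c_i\mid T>t_i,\overline M_i=\overline m_i,\overline C_{i-1}=\overline c_{i-1},A=a)=P(C_i=c_i\mid T>t_i,\overline M_i=\overline m_i,\overline C_{i-1}=\overline c_{i-1},A=a^* )$ for all $i$ and all values. Then for all $t>0$, $$P_{a,a^*}(T>t)=\exp\Big\{-(a-a^* )\int_0^t\rho_s\,ds\Big\}\,P(T>t\mid A=a^* ).$$ Consequently, with $Q(t;j,j')=P_{j,j'}(T>t)$, the survival direct effect $SDE(t)=Q(t;a,a^* )/Q(t;a^*,a^* )$ equals $\exp\{(a^*-a)\int_0^t\rho_s ds\}$ and the survival indirect effect $SIE(t)=Q(t;a,a)/Q(t;a,a^* )$ equals $\exp\{(a-a^* )\int_0^t\rho_s ds\}\,P(T>t\mid A=a)/P(T>t\mid A=a^* )$.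
   Context: Setting: $0=t_0<t_1<\cdots$; random variables $A\in\{a,a^*\}$, finite-valued mediators $M_i$ and covariates $C_i$, survival time $T$ with $P(T>0)=1$; $\overline M_i=(M_0,\dots,M_i)$, $\overline C_i=(C_0,\dots,C_i)$. $P_{j,j'}$ is the interventional distribution under $do(A^D=j,A^M=j')$, $P_{do(A=j)}$ that under $do(A=j)$, $P$ the observational distribution. Assumptions: (P1) $P_{j,j}=P_{do(A=j)}$; (A0) $P_{do(A=j)}(E)=P(E\mid A=j)$ for events $E$ in $T,M_i,C_i$; (A1) $P_{a,a^*}(M_i=m_i\mid T>t_i,\overline M_{i-1},\overline C_{i-1})=P_{a^*,a^*}(M_i=m_i\mid T>t_i,\overline M_{i-1},\overline C_{i-1})$; (A2) for $t_i<s\le t_{i+1}$, $P_{a,a^*}(T>s\mid T>t_i,\overline M_i,\overline C_i)=P_{a,a}(T>s\mid T>t_i,\overline M_i,\overline C_i)$; (A3) $P_{a,a^*}(C_i=c_i\mid T>t_i,\overline M_i,\overline C_{i-1})=P_{a,a}(C_i=c_i\mid T>t_i,\overline M_i,\overline C_{i-1})$ (all for all values of the conditioning variables, index $-1$ meaning empty conditioning). All conditional probabilities are assumed well defined. *)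

theory Defs
  imports "HOL-Probability.Probability"
begin

definition cprob :: "'w measure \<Rightarrow> 'w set \<Rightarrow> 'w set \<Rightarrow> real" where
  "cprob Q E F = measure Q (E \<inter> F) / measure Q F"

text \<open>History of the first n values: hist X n w = (X 0 w, ..., X (n-1) w).
  Thus \<open>\<overline>M_i\<close> is hist M (Suc i) and \<open>\<overline>M_{i-1}\<close> is hist M i (empty for i = 0).\<close>
definition hist :: "(nat \<Rightarrow> 'w \<Rightarrow> 'v) \<Rightarrow> nat \<Rightarrow> 'w \<Rightarrow> 'v list" where
  "hist X n w = map (\<lambda>k. X k w) [0..<n]"

definition hist_in :: "(nat \<Rightarrow> 'v set) \<Rightarrow> nat \<Rightarrow> 'v list \<Rightarrow> bool" where
  "hist_in V n xs \<longleftrightarrow> length xs = n \<and> (\<forall>k<n. xs ! k \<in> V k)"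

definition histev :: "'w set \<Rightarrow> ('w \<Rightarrow> real) \<Rightarrow> (nat \<Rightarrow> 'w \<Rightarrow> 'm) \<Rightarrow> (nat \<Rightarrow> 'w \<Rightarrow> 'c)
    \<Rightarrow> real \<Rightarrow> nat \<Rightarrow> nat \<Rightarrow> 'm list \<Rightarrow> 'c list \<Rightarrow> 'w set" where
  "histev \<Omega> T M C t nm nc mb cb =
     {w \<in> \<Omega>. T w > t \<and> hist M nm w = mb \<and> hist C nc w = cb}"

text \<open>Events "in T, M_i, C_i": the sigma algebra generated by these variables.\<close>
definition obs_events :: "'w set \<Rightarrow> ('w \<Rightarrow> real) \<Rightarrow> (nat \<Rightarrow> 'w \<Rightarrow> 'm) \<Rightarrow> (nat \<Rightarrow> 'w \<Rightarrow> 'c)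
    \<Rightarrow> 'w set set" where
  "obs_events \<Omega> T M C = sigma_sets \<Omega>
     ({T -` B \<inter> \<Omega> | B. B \<in> sets borel} \<union> {M i -` {m} \<inter> \<Omega> | i m. True}
      \<union> {C i -` {c} \<inter> \<Omega> | i c. True})"

end

theory Submission
  imports Defs
begin

text \<open>Along the grid, the joint law of survival and history under the intervention
  \<open>(a, a*)\<close> factorises into mediator, covariate and survival factors. The mediator factors are those
  of the \<open>(a*, a*)\<close>-world by (A1); by (A3), (P1), (A0) and (H2) so are the covariate factors; by (A2),
  (P1), (A0) and the additive hazard (H1), the survival factor on \<open>(t_i, t]\<close> is that of the
  \<open>(a*, a*)\<close>-world times \<open>exp (-(a - a*) \<integral>[t_i, t] \<rho>)\<close>, the baseline hazard \<open>\<lambda>\<^sub>1\<close> cancelling.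
  Induction along the grid therefore gives
  \<open>P_{a,a*}(T > t, history) = exp (-(a - a*) \<integral>[0, t] \<rho>) P_{a*,a*}(T > t, history)\<close>
  for every history; summing over the finitely many histories and identifying \<open>P_{j,j}\<close> with
  \<open>P( \<cdot> | A = j)\<close> by (P1) and (A0) yields the survival formula, and the effect ratios follow.\<close>

lemma interval_lebesgue_integrable_of_set_integrable:
  fixes f :: "real \<Rightarrow> real"
  assumes "set_integrable lborel {x..y} f" "x \<le> u" "u \<le> v" "v \<le> y"
  shows "interval_lebesgue_integrable lborel (ereal u) (ereal v) f"
  using assms unfolding interval_lebesgue_integrable_def
  by (auto simp: einterval_eq intro!: set_integrable_subset[OF assms(1)])

lemma exp_neg_integral_shift:
  fixes \<rho> l :: "real \<Rightarrow> real"
  assumes "interval_lebesgue_integrable lborel (ereal u) (ereal v) \<rho>"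
    and "interval_lebesgue_integrable lborel (ereal u) (ereal v) l"
  shows "exp (- (LBINT s=u..v. \<rho> s * x + l s))
       = exp (- (x - y) * (LBINT s=u..v. \<rho> s)) * exp (- (LBINT s=u..v. \<rho> s * y + l s))"
proof -
  have "(LBINT s=u..v. \<rho> s * z + l s) = (LBINT s=u..v. \<rho> s) * z + (LBINT s=u..v. l s)" for z
    using interval_lebesgue_integral_add(2)[OF interval_lebesgue_integrable_mult_left[OF assms(1)] assms(2)]
    by simp
  then show ?thesis
    by (simp add: exp_add[symmetric] algebra_simps)
qed

lemma grid_interval_exists:
  fixes tg :: "nat \<Rightarrow> real"
  assumes "filterlim tg at_top sequentially" "tg 0 < t"
  obtains k where "tg k < t" "t \<le> tg (Suc k)"
proof -
  obtain n where n: "t \<le> tg n"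
    using assms(1) by (auto simp: filterlim_at_top eventually_sequentially)
  define n0 where "n0 = (LEAST n. t \<le> tg n)"
  have n0: "t \<le> tg n0"
    unfolding n0_def by (rule LeastI[of _ n]) (rule n)
  then obtain k where k: "n0 = Suc k"
    using assms(2) by (cases n0) auto
  have "tg k < t"
    using Least_le[of "\<lambda>n. t \<le> tg n" k] k unfolding n0_def by force
  then show ?thesis
    using that n0 k by blast
qed

lemma measure_Int_eq_cprob_mult:
  assumes "finite_measure Q" "E \<inter> F \<in> sets Q" "F \<in> sets Q"
  shows "measure Q (E \<inter> F) = cprob Q E F * measure Q F"
proof (cases "measure Q F = 0")
  case True
  interpret finite_measure Q by fact
  have "measure Q (E \<inter> F) \<le> measure Q F"
    using assms by (intro finite_measure_mono) auto
  then show ?thesis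
    using True measure_nonneg[of Q "E \<inter> F"] by (simp add: cprob_def)
qed (simp add: cprob_def)

lemma cprob_of_conditional_measure:
  assumes "measure Q (E \<inter> F) = cprob P (E \<inter> F) B" "measure Q F = cprob P F B"
    and "measure P B \<noteq> 0"
  shows "cprob Q E F = cprob P E (F \<inter> B)"
  using assms by (simp add: cprob_def Int_assoc)

lemma (in prob_space) cprob_eq_1_if_prob_1:
  assumes "E \<in> events" "B \<in> events" "prob E = 1" "prob B \<noteq> 0"
  shows "cprob M E B = 1"
proof -
  have "AE x in M. x \<in> E"
    using assms prob_eq_1 by blast
  then have "prob (E \<inter> B) = prob B"
    using assms by (intro measure_eq_AE) auto
  then show ?thesis
    using assms(4) by (simp add: cprob_def)
qed

subsection \<open>Histories\<close>

lemma hist_Suc: "hist X (Suc n) w = hist X n w @ [X n w]"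
  by (simp add: hist_def)

lemma hist_in_hist: "(\<And>k. X k w \<in> V k) \<Longrightarrow> hist_in V n (hist X n w)"
  by (auto simp: hist_in_def hist_def)

lemma hist_in_SucE:
  assumes "hist_in V (Suc n) xs"
  obtains ys y where "xs = ys @ [y]" "hist_in V n ys"
proof -
  have "xs \<noteq> []"
    using assms by (auto simp: hist_in_def)
  then obtain ys y where xs: "xs = ys @ [y]"
    by (metis rev_exhaust)
  have "hist_in V n ys"
    using assms unfolding hist_in_def xs
    by (auto simp: nth_append) (metis less_SucI nth_append)
  then show ?thesis
    using that xs by blast
qed

lemma finite_hist_in: "(\<And>k. finite (V k)) \<Longrightarrow> finite {xs. hist_in V n xs}"
proof -
  assume "\<And>k. finite (V k)"
  then have "finite {xs. set xs \<subseteq> (\<Union>k<n. V k) \<and> length xs = n}"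
    by (intro finite_lists_length_eq) auto
  moreover have "{xs. hist_in V n xs} \<subseteq> {xs. set xs \<subseteq> (\<Union>k<n. V k) \<and> length xs = n}"
    by (auto simp: hist_in_def in_set_conv_nth) blast
  ultimately show ?thesis
    by (rule finite_subset[rotated])
qed

lemma hist_eq_in_sigma_algebra:
  assumes "sigma_algebra \<Omega> S" "\<And>k x. {w\<in>\<Omega>. X k w = x} \<in> S"
  shows "{w\<in>\<Omega>. hist X n w = xs} \<in> S"
proof (induction n arbitrary: xs)
  case 0
  interpret sigma_algebra \<Omega> S by fact
  show ?case
    by (cases "xs = []") (auto simp: hist_def)
next
  case (Suc n)
  interpret sigma_algebra \<Omega> S by fact
  show ?case
  proof (cases xs rule: rev_cases)
    case (snoc ys y)
    then have "{w\<in>\<Omega>. hist X (Suc n) w = xs} = {w\<in>\<Omega>. hist X n w = ys} \<inter> {w\<in>\<Omega>. X n w = y}"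
      by (auto simp: hist_Suc)
    then show ?thesis
      using Suc assms(2) by auto
  qed (simp add: hist_Suc)
qed

lemma histev_in_sigma_algebra:
  assumes "sigma_algebra \<Omega> S" "\<And>t. {w\<in>\<Omega>. T w > t} \<in> S"
    and "\<And>k x. {w\<in>\<Omega>. M k w = x} \<in> S" "\<And>k x. {w\<in>\<Omega>. C k w = x} \<in> S"
  shows "histev \<Omega> T M C t nm nc mb cb \<in> S"
proof -
  interpret sigma_algebra \<Omega> S by fact
  have "histev \<Omega> T M C t nm nc mb cb
      = {w\<in>\<Omega>. T w > t} \<inter> {w\<in>\<Omega>. hist M nm w = mb} \<inter> {w\<in>\<Omega>. hist C nc w = cb}"
    by (auto simp: histev_def)
  then show ?thesis
    using assms(2) hist_eq_in_sigma_algebra[OF assms(1) assms(3)]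
      hist_eq_in_sigma_algebra[OF assms(1) assms(4)] by (simp add: Int)
qed

lemma sigma_algebra_obs_events: "sigma_algebra \<Omega> (obs_events \<Omega> T M C)"
  unfolding obs_events_def by (rule sigma_algebra_sigma_sets) auto

lemma obs_events_T_gt: "{w\<in>\<Omega>. T w > t} \<in> obs_events \<Omega> T M C"
proof -
  have "{w\<in>\<Omega>. T w > t} = T -` {t<..} \<inter> \<Omega>"
    by auto
  then show ?thesis
    unfolding obs_events_def by (intro sigma_sets.Basic UnI1 CollectI exI[of _ "{t<..}"]) simp
qed

lemma obs_events_M_eq: "{w\<in>\<Omega>. M k w = x} \<in> obs_events \<Omega> T M C"
proof -
  have "{w\<in>\<Omega>. M k w = x} = M k -` {x} \<inter> \<Omega>"
    by auto
  then show ?thesis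
    unfolding obs_events_def by (intro sigma_sets.Basic UnI1 UnI2 CollectI exI[of _ k] exI[of _ x]) simp
qed

lemma obs_events_C_eq: "{w\<in>\<Omega>. C k w = x} \<in> obs_events \<Omega> T M C"
proof -
  have "{w\<in>\<Omega>. C k w = x} = C k -` {x} \<inter> \<Omega>"
    by auto
  then show ?thesis
    unfolding obs_events_def by (intro sigma_sets.Basic UnI2 CollectI exI[of _ k] exI[of _ x]) simp
qed

lemma histev_in_obs_events: "histev \<Omega> T M C t nm nc mb cb \<in> obs_events \<Omega> T M C"
  by (intro histev_in_sigma_algebra sigma_algebra_obs_events
      obs_events_T_gt obs_events_M_eq obs_events_C_eq)

lemma obs_events_subset_sets:
  assumes "T \<in> borel_measurable P"
    and "\<And>i. M i \<in> measurable P (count_space UNIV)" "\<And>i. C i \<in> measurable P (count_space UNIV)"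
  shows "obs_events (space P) T M C \<subseteq> sets P"
  unfolding obs_events_def using assms by (intro sets.sigma_sets_subset) auto


subsection \<open>Survival under the cross-world intervention\<close>

text \<open>(P1) and (A0) enter only through their combination \<open>do_obs\<close>.\<close>

locale mediational_g_formula =
  fixes P :: "'w measure" and Pint :: "real \<Rightarrow> real \<Rightarrow> 'w measure"
    and A T :: "'w \<Rightarrow> real" and M :: "nat \<Rightarrow> 'w \<Rightarrow> 'm" and C :: "nat \<Rightarrow> 'w \<Rightarrow> 'c"
    and Mv :: "nat \<Rightarrow> 'm set" and Cv :: "nat \<Rightarrow> 'c set" and tg :: "nat \<Rightarrow> real"
    and a a' :: real and \<rho> :: "real \<Rightarrow> real" and lam1 :: "real \<Rightarrow> 'm list \<Rightarrow> 'c list \<Rightarrow> real"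
  assumes prob_space_P: "prob_space P"
    and prob_space_Pint: "\<And>j j'. prob_space (Pint j j')"
    and sets_Pint: "\<And>j j'. sets (Pint j j') = sets P"
    and measurable_A: "A \<in> borel_measurable P"
    and measurable_T: "T \<in> borel_measurable P"
    and measurable_M: "\<And>i. M i \<in> measurable P (count_space UNIV)"
    and measurable_C: "\<And>i. C i \<in> measurable P (count_space UNIV)"
    and finite_Mv: "\<And>i. finite (Mv i)" and M_in_Mv: "\<And>i w. w \<in> space P \<Longrightarrow> M i w \<in> Mv i"
    and finite_Cv: "\<And>i. finite (Cv i)" and C_in_Cv: "\<And>i w. w \<in> space P \<Longrightarrow> C i w \<in> Cv i"
    and grid_0: "tg 0 = 0" and grid_strict_mono: "strict_mono tg"
    and grid_unbounded: "filterlim tg at_top sequentially"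
    and T_pos: "measure P {w \<in> space P. T w > 0} = 1"
    and T_pos_int: "measure (Pint a a') {w \<in> space P. T w > 0} = 1"
    and arm_pos: "\<And>j. j \<in> {a, a'} \<Longrightarrow> measure P {w \<in> space P. A w = j} > 0"
    and history_pos: "\<And>i mb cb. hist_in Mv i mb \<Longrightarrow> hist_in Cv i cb \<Longrightarrow>
        measure (Pint a' a') (histev (space P) T M C (tg i) i i mb cb) > 0"
    and do_obs: "\<And>j E. j \<in> {a, a'} \<Longrightarrow> E \<in> obs_events (space P) T M C \<Longrightarrow>
        measure (Pint j j) E = cprob P E {w \<in> space P. A w = j}"
    and A1: "\<And>i m mb cb. hist_in Mv i mb \<Longrightarrow> hist_in Cv i cb \<Longrightarrow>
        cprob (Pint a a') {w \<in> space P. M i w = m} (histev (space P) T M C (tg i) i i mb cb)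
      = cprob (Pint a' a') {w \<in> space P. M i w = m} (histev (space P) T M C (tg i) i i mb cb)"
    and A2: "\<And>i s mb cb. tg i < s \<Longrightarrow> s \<le> tg (Suc i) \<Longrightarrow>
        hist_in Mv (Suc i) mb \<Longrightarrow> hist_in Cv (Suc i) cb \<Longrightarrow>
        cprob (Pint a a') {w \<in> space P. T w > s} (histev (space P) T M C (tg i) (Suc i) (Suc i) mb cb)
      = cprob (Pint a a) {w \<in> space P. T w > s} (histev (space P) T M C (tg i) (Suc i) (Suc i) mb cb)"
    and A3: "\<And>i c mb cb. hist_in Mv (Suc i) mb \<Longrightarrow> hist_in Cv i cb \<Longrightarrow>
        cprob (Pint a a') {w \<in> space P. C i w = c} (histev (space P) T M C (tg i) (Suc i) i mb cb)
      = cprob (Pint a a) {w \<in> space P. C i w = c} (histev (space P) T M C (tg i) (Suc i) i mb cb)"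
    and rho_loc_int: "\<And>x y. set_integrable lborel {x..y} \<rho>"
    and lam_int: "\<And>i mb cb. hist_in Mv (Suc i) mb \<Longrightarrow> hist_in Cv (Suc i) cb \<Longrightarrow>
        set_integrable lborel {tg i..tg (Suc i)} (\<lambda>s. lam1 s mb cb)"
    and H1: "\<And>i t j mb cb. tg i \<le> t \<Longrightarrow> t \<le> tg (Suc i) \<Longrightarrow> j \<in> {a, a'} \<Longrightarrow>
        hist_in Mv (Suc i) mb \<Longrightarrow> hist_in Cv (Suc i) cb \<Longrightarrow>
        cprob P {w \<in> space P. T w > t}
          (histev (space P) T M C (tg i) (Suc i) (Suc i) mb cb \<inter> {w \<in> space P. A w = j})
      = exp (- (LBINT s=tg i..t. \<rho> s * j + lam1 s mb cb))"
    and H2: "\<And>i c mb cb. hist_in Mv (Suc i) mb \<Longrightarrow> hist_in Cv i cb \<Longrightarrow>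
        cprob P {w \<in> space P. C i w = c}
          (histev (space P) T M C (tg i) (Suc i) i mb cb \<inter> {w \<in> space P. A w = a})
      = cprob P {w \<in> space P. C i w = c}
          (histev (space P) T M C (tg i) (Suc i) i mb cb \<inter> {w \<in> space P. A w = a'})"
begin

sublocale P: prob_space P
  by (rule prob_space_P)

abbreviation arm :: "real \<Rightarrow> 'w set" where
  "arm j \<equiv> {w \<in> space P. A w = j}"

abbreviation survives :: "real \<Rightarrow> 'w set" where
  "survives t \<equiv> {w \<in> space P. T w > t}"

abbreviation Ev :: "real \<Rightarrow> nat \<Rightarrow> nat \<Rightarrow> 'm list \<Rightarrow> 'c list \<Rightarrow> 'w set" where
  "Ev \<equiv> histev (space P) T M C"

abbreviation obs :: "'w set set" where
  "obs \<equiv> obs_events (space P) T M C"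

definition sde :: "real \<Rightarrow> real" where
  "sde t = exp (- (a - a') * (LBINT s=0..t. \<rho> s))"

lemma finite_measure_Pint: "finite_measure (Pint j j')"
  using prob_space_Pint prob_space_def by metis

lemma obs_in_sets_Pint: "E \<in> obs \<Longrightarrow> E \<in> sets (Pint j j')"
  using obs_events_subset_sets[of T P M C, OF measurable_T measurable_M measurable_C] sets_Pint by auto

lemma arm_in_sets: "arm j \<in> sets P"
  using measurable_A by measurable

lemma cprob_do:
  assumes "j \<in> {a, a'}" "E \<in> obs" "F \<in> obs"
  shows "cprob (Pint j j) E F = cprob P E (F \<inter> arm j)"
proof (rule cprob_of_conditional_measure)
  interpret obs: sigma_algebra "space P" obs
    by (rule sigma_algebra_obs_events)
  show "measure (Pint j j) (E \<inter> F) = cprob P (E \<inter> F) (arm j)"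
    using assms by (intro do_obs obs.Int) auto
  show "measure (Pint j j) F = cprob P F (arm j)"
    using assms by (intro do_obs) auto
  show "measure P (arm j) \<noteq> 0"
    using arm_pos[OF assms(1)] by simp
qed

lemma grid_nonneg: "tg i \<ge> 0"
  using strict_mono_less_eq[OF grid_strict_mono, of 0 i] grid_0 by simp

lemma sde_split:
  assumes "0 \<le> u" "u \<le> t"
  shows "sde t = exp (- (a - a') * (LBINT s=u..t. \<rho> s)) * sde u"
proof -
  have "interval_lebesgue_integrable lborel (min 0 (min (ereal u) (ereal t)))
      (max 0 (max (ereal u) (ereal t))) \<rho>"
    using assms interval_lebesgue_integrable_of_set_integrable[OF rho_loc_int[of 0 t], of 0 t]
    by (simp add: min_def max_def zero_ereal_def)
  then have "(LBINT s=0..t. \<rho> s) = (LBINT s=0..u. \<rho> s) + (LBINT s=u..t. \<rho> s)"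
    by (simp add: interval_integral_sum)
  then show ?thesis
    unfolding sde_def by (simp add: exp_add[symmetric] algebra_simps)
qed

lemma covariate_factor:
  assumes "hist_in Mv (Suc i) mb" "hist_in Cv i cb"
  shows "cprob (Pint a a') {w \<in> space P. C i w = c} (Ev (tg i) (Suc i) i mb cb)
       = cprob (Pint a' a') {w \<in> space P. C i w = c} (Ev (tg i) (Suc i) i mb cb)"
    (is "cprob _ ?E ?G = _")
proof -
  have obs: "?E \<in> obs" "?G \<in> obs"
    by (simp_all add: obs_events_C_eq histev_in_obs_events)
  have "cprob (Pint a a') ?E ?G = cprob (Pint a a) ?E ?G"
    using A3[OF assms] .
  also have "\<dots> = cprob P ?E (?G \<inter> arm a)"
    using obs by (intro cprob_do) auto
  also have "\<dots> = cprob P ?E (?G \<inter> arm a')"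
    using H2[OF assms] .
  also have "\<dots> = cprob (Pint a' a') ?E ?G"
    using obs by (intro cprob_do[symmetric]) auto
  finally show ?thesis .
qed

lemma survival_factor:
  assumes t: "tg i < t" "t \<le> tg (Suc i)"
    and h: "hist_in Mv (Suc i) mb" "hist_in Cv (Suc i) cb"
  shows "cprob (Pint a a') (survives t) (Ev (tg i) (Suc i) (Suc i) mb cb)
       = exp (- (a - a') * (LBINT s=tg i..t. \<rho> s))
         * cprob (Pint a' a') (survives t) (Ev (tg i) (Suc i) (Suc i) mb cb)"
    (is "cprob _ ?E ?G = _")
proof -
  have obs: "?E \<in> obs" "?G \<in> obs"
    by (simp_all add: obs_events_T_gt histev_in_obs_events)
  have "interval_lebesgue_integrable lborel (tg i) t \<rho>"
    "interval_lebesgue_integrable lborel (tg i) t (\<lambda>s. lam1 s mb cb)"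
    using t interval_lebesgue_integrable_of_set_integrable[OF rho_loc_int[of "tg i" t], of "tg i" t]
      interval_lebesgue_integrable_of_set_integrable[OF lam_int[OF h], of "tg i" t]
    by simp_all
  note shift = exp_neg_integral_shift[OF this, of a a']
  have "cprob (Pint a a') ?E ?G = cprob (Pint a a) ?E ?G"
    using A2[OF t h] .
  also have "\<dots> = cprob P ?E (?G \<inter> arm a)"
    using obs by (intro cprob_do) auto
  also have "\<dots> = exp (- (LBINT s=tg i..t. \<rho> s * a + lam1 s mb cb))"
    using H1[of i t a mb cb] t h by simp
  also have "\<dots> = exp (- (a - a') * (LBINT s=tg i..t. \<rho> s))
      * exp (- (LBINT s=tg i..t. \<rho> s * a' + lam1 s mb cb))"
    by (rule shift)
  also have "exp (- (LBINT s=tg i..t. \<rho> s * a' + lam1 s mb cb)) = cprob P ?E (?G \<inter> arm a')"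
    using H1[of i t a' mb cb] t h by simp
  also have "\<dots> = cprob (Pint a' a') ?E ?G"
    using obs by (intro cprob_do[symmetric]) auto
  finally show ?thesis .
qed

lemma histev_Suc_chain_rule:
  assumes "tg i \<le> t"
  shows "measure (Pint j j') (Ev t (Suc i) (Suc i) (mb @ [m]) (cb @ [c]))
       = cprob (Pint j j') (survives t) (Ev (tg i) (Suc i) (Suc i) (mb @ [m]) (cb @ [c]))
         * cprob (Pint j j') {w \<in> space P. C i w = c} (Ev (tg i) (Suc i) i (mb @ [m]) cb)
         * cprob (Pint j j') {w \<in> space P. M i w = m} (Ev (tg i) i i mb cb)
         * measure (Pint j j') (Ev (tg i) i i mb cb)"
proof -
  let ?Q = "Pint j j'"
  let ?S = "Ev t (Suc i) (Suc i) (mb @ [m]) (cb @ [c])"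
  let ?GMC = "Ev (tg i) (Suc i) (Suc i) (mb @ [m]) (cb @ [c])"
  let ?GM = "Ev (tg i) (Suc i) i (mb @ [m]) cb"
  let ?G = "Ev (tg i) i i mb cb"
  have ev: "Ev s n n' xs ys \<in> sets ?Q" for s n n' xs ys
    by (intro obs_in_sets_Pint histev_in_obs_events)
  note chain = measure_Int_eq_cprob_mult[OF finite_measure_Pint]
  have "survives t \<inter> ?GMC = ?S"
    using assms by (auto simp: histev_def)
  then have "measure ?Q ?S = cprob ?Q (survives t) ?GMC * measure ?Q ?GMC"
    using chain[of "survives t" ?GMC] ev by simp
  moreover have "{w \<in> space P. C i w = c} \<inter> ?GM = ?GMC"
    by (auto simp: histev_def hist_Suc)
  then have "measure ?Q ?GMC = cprob ?Q {w \<in> space P. C i w = c} ?GM * measure ?Q ?GM"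
    using chain[of "{w \<in> space P. C i w = c}" ?GM] ev by simp
  moreover have "{w \<in> space P. M i w = m} \<inter> ?G = ?GM"
    by (auto simp: histev_def hist_Suc)
  then have "measure ?Q ?GM = cprob ?Q {w \<in> space P. M i w = m} ?G * measure ?Q ?G"
    using chain[of "{w \<in> space P. M i w = m}" ?G] ev by simp
  ultimately show ?thesis
    by simp
qed

lemma histev_ratio_step:
  assumes IH: "\<And>mb cb. hist_in Mv i mb \<Longrightarrow> hist_in Cv i cb \<Longrightarrow>
      measure (Pint a a') (Ev (tg i) i i mb cb) = sde (tg i) * measure (Pint a' a') (Ev (tg i) i i mb cb)"
    and t: "tg i < t" "t \<le> tg (Suc i)"
    and h: "hist_in Mv (Suc i) mb" "hist_in Cv (Suc i) cb"
  shows "measure (Pint a a') (Ev t (Suc i) (Suc i) mb cb)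
       = sde t * measure (Pint a' a') (Ev t (Suc i) (Suc i) mb cb)"
proof -
  obtain mb0 m where mb: "mb = mb0 @ [m]" and hm: "hist_in Mv i mb0"
    using hist_in_SucE[OF h(1)] by blast
  obtain cb0 c where cb: "cb = cb0 @ [c]" and hc: "hist_in Cv i cb0"
    using hist_in_SucE[OF h(2)] by blast
  have hm': "hist_in Mv (Suc i) (mb0 @ [m])"
    using h(1) mb by simp
  have "measure (Pint a a') (Ev t (Suc i) (Suc i) mb cb)
      = exp (- (a - a') * (LBINT s=tg i..t. \<rho> s)) * sde (tg i)
        * (cprob (Pint a' a') (survives t) (Ev (tg i) (Suc i) (Suc i) mb cb)
          * cprob (Pint a' a') {w \<in> space P. C i w = c} (Ev (tg i) (Suc i) i (mb0 @ [m]) cb0)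
          * cprob (Pint a' a') {w \<in> space P. M i w = m} (Ev (tg i) i i mb0 cb0)
          * measure (Pint a' a') (Ev (tg i) i i mb0 cb0))"
    using histev_Suc_chain_rule[of i t a a' mb0 m cb0 c] t survival_factor[OF t h]
    by (simp add: mb cb covariate_factor[OF hm' hc] A1[OF hm hc] IH[OF hm hc])
  also have "\<dots> = sde t * measure (Pint a' a') (Ev t (Suc i) (Suc i) mb cb)"
    using histev_Suc_chain_rule[of i t a' a' mb0 m cb0 c] t sde_split[of "tg i" t] grid_nonneg[of i]
    by (simp add: mb cb)
  finally show ?thesis .
qed

lemma histev_ratio_grid:
  "hist_in Mv i mb \<Longrightarrow> hist_in Cv i cb \<Longrightarrow>
    measure (Pint a a') (Ev (tg i) i i mb cb) = sde (tg i) * measure (Pint a' a') (Ev (tg i) i i mb cb)"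
proof (induction i arbitrary: mb cb)
  case 0
  then have "mb = []" "cb = []"
    by (simp_all add: hist_in_def)
  then have ev: "Ev (tg 0) 0 0 mb cb = survives 0"
    by (auto simp: histev_def hist_def grid_0)
  have "measure (Pint a' a') (survives 0) = cprob P (survives 0) (arm a')"
    by (simp add: do_obs obs_events_T_gt)
  also have "\<dots> = 1"
  proof (rule P.cprob_eq_1_if_prob_1)
    show "survives 0 \<in> sets P"
      using measurable_T by measurable
  qed (use arm_in_sets T_pos arm_pos[of a'] in auto)
  finally show ?case
    using T_pos_int ev by (simp add: sde_def grid_0 zero_ereal_def)
next
  case (Suc i)
  then show ?case
    using histev_ratio_step[OF Suc.IH] strict_monoD[OF grid_strict_mono, of i "Suc i"] by simp
qed

lemma measure_survives_eq_sum_histev: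
  "measure (Pint j j') (survives t)
    = (\<Sum>h\<in>{mb. hist_in Mv n mb} \<times> {cb. hist_in Cv n cb}. measure (Pint j j') (Ev t n n (fst h) (snd h)))"
proof -
  let ?H = "{mb. hist_in Mv n mb} \<times> {cb. hist_in Cv n cb}"
  have "survives t = (\<Union>h\<in>?H. Ev t n n (fst h) (snd h))"
    using M_in_Mv C_in_Cv by (auto simp: histev_def intro!: hist_in_hist)
  moreover have "measure (Pint j j') (\<Union>h\<in>?H. Ev t n n (fst h) (snd h))
      = (\<Sum>h\<in>?H. measure (Pint j j') (Ev t n n (fst h) (snd h)))"
  proof (rule measure_finite_Union)
    show "finite ?H"
      using finite_hist_in[of Mv, OF finite_Mv] finite_hist_in[of Cv, OF finite_Cv] by blast
    show "(\<lambda>h. Ev t n n (fst h) (snd h)) ` ?H \<subseteq> sets (Pint j j')"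
      by (auto intro: obs_in_sets_Pint histev_in_obs_events)
    show "disjoint_family_on (\<lambda>h. Ev t n n (fst h) (snd h)) ?H"
      by (auto simp: disjoint_family_on_def histev_def prod_eq_iff)
    show "emeasure (Pint j j') (Ev t n n (fst h) (snd h)) \<noteq> \<infinity>" for h
      using finite_measure.emeasure_finite[OF finite_measure_Pint] by simp
  qed
  ultimately show ?thesis
    by simp
qed

lemma survival_ratio:
  assumes "t > 0"
  shows "measure (Pint a a') (survives t) = sde t * measure (Pint a' a') (survives t)"
proof -
  obtain k where t: "tg k < t" "t \<le> tg (Suc k)"
    using grid_interval_exists[OF grid_unbounded] assms grid_0 by auto
  have "measure (Pint a a') (Ev t (Suc k) (Suc k) mb cb)
      = sde t * measure (Pint a' a') (Ev t (Suc k) (Suc k) mb cb)"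
    if "hist_in Mv (Suc k) mb" "hist_in Cv (Suc k) cb" for mb cb
    by (rule histev_ratio_step[OF histev_ratio_grid t that])
  then show ?thesis
    unfolding measure_survives_eq_sum_histev[where n = "Suc k"] sum_distrib_left
    by (intro sum.cong) auto
qed

lemma survival_pos:
  assumes "t > 0"
  shows "measure (Pint a' a') (survives t) > 0"
proof -
  obtain k where t: "t \<le> tg (Suc k)"
    using grid_interval_exists[OF grid_unbounded] assms grid_0 by auto
  obtain w where w: "w \<in> space P"
    using P.not_empty by blast
  let ?G = "Ev (tg (Suc k)) (Suc k) (Suc k) (hist M (Suc k) w) (hist C (Suc k) w)"
  have "0 < measure (Pint a' a') ?G"
    using w M_in_Mv C_in_Cv by (intro history_pos hist_in_hist)
  also have "\<dots> \<le> measure (Pint a' a') (survives t)"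
    using t by (intro finite_measure.finite_measure_mono[OF finite_measure_Pint]
        obs_in_sets_Pint obs_events_T_gt) (auto simp: histev_def)
  finally show ?thesis .
qed

theorem survival_effects:
  assumes "t > 0"
  shows "measure (Pint a a') (survives t)
      = exp (- (a - a') * (LBINT s=0..t. \<rho> s)) * cprob P (survives t) (arm a')"
    and "measure (Pint a a') (survives t) / measure (Pint a' a') (survives t)
      = exp ((a' - a) * (LBINT s=0..t. \<rho> s))"
    and "measure (Pint a a) (survives t) / measure (Pint a a') (survives t)
      = exp ((a - a') * (LBINT s=0..t. \<rho> s)) * cprob P (survives t) (arm a)
        / cprob P (survives t) (arm a')"
proof -
  have do_survives: "measure (Pint j j) (survives t) = cprob P (survives t) (arm j)"
    if "j \<in> {a, a'}" for j
    using that by (simp add: do_obs obs_events_T_gt)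
  note ratio = survival_ratio[OF assms]
  show "measure (Pint a a') (survives t)
      = exp (- (a - a') * (LBINT s=0..t. \<rho> s)) * cprob P (survives t) (arm a')"
    using ratio do_survives[of a'] by (simp add: sde_def)
  show "measure (Pint a a') (survives t) / measure (Pint a' a') (survives t)
      = exp ((a' - a) * (LBINT s=0..t. \<rho> s))"
    using ratio survival_pos[OF assms] by (simp add: sde_def)
  show "measure (Pint a a) (survives t) / measure (Pint a a') (survives t)
      = exp ((a - a') * (LBINT s=0..t. \<rho> s)) * cprob P (survives t) (arm a)
        / cprob P (survives t) (arm a')"
  proof -
    have inverse: "exp ((a - a') * (LBINT s=0..t. \<rho> s)) * sde t = 1"
      unfolding sde_def by (simp flip: exp_add add: algebra_simps)
    have "measure (Pint a a) (survives t) / measure (Pint a a') (survives t)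
        = cprob P (survives t) (arm a) / (sde t * cprob P (survives t) (arm a'))"
      using ratio do_survives[of a] do_survives[of a'] by simp
    also have "\<dots> = exp ((a - a') * (LBINT s=0..t. \<rho> s)) * sde t * cprob P (survives t) (arm a)
        / (sde t * cprob P (survives t) (arm a'))"
      using inverse by simp
    also have "\<dots> = exp ((a - a') * (LBINT s=0..t. \<rho> s)) * cprob P (survives t) (arm a)
        / cprob P (survives t) (arm a')"
      by (simp add: sde_def)
    finally show ?thesis .
  qed
qed

end

theorem mainTheorem8:
  fixes P :: "'w measure"
    and Pint :: "real \<Rightarrow> real \<Rightarrow> 'w measure"
    and Pdo :: "real \<Rightarrow> 'w measure"
    and A T :: "'w \<Rightarrow> real"
    and M :: "nat \<Rightarrow> 'w \<Rightarrow> 'm" and C :: "nat \<Rightarrow> 'w \<Rightarrow> 'c"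
    and Mv :: "nat \<Rightarrow> 'm set" and Cv :: "nat \<Rightarrow> 'c set"
    and tg :: "nat \<Rightarrow> real"
    and a a' :: real
    and \<rho> :: "real \<Rightarrow> real" and lam1 :: "real \<Rightarrow> 'm list \<Rightarrow> 'c list \<Rightarrow> real"
  assumes probP: "prob_space P"
    and probInt: "\<And>j j'. prob_space (Pint j j')"
    and probDo: "\<And>j. prob_space (Pdo j)"
    and setsInt: "\<And>j j'. sets (Pint j j') = sets P"
    and setsDo: "\<And>j. sets (Pdo j) = sets P"
    and measA: "A \<in> borel_measurable P"
    and measT: "T \<in> borel_measurable P"
    and measM: "\<And>i. M i \<in> measurable P (count_space UNIV)"
    and measC: "\<And>i. C i \<in> measurable P (count_space UNIV)"
    and A_vals: "\<And>w. w \<in> space P \<Longrightarrow> A w \<in> {a, a'}"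
    and M_fin: "\<And>i. finite (Mv i)" and M_vals: "\<And>i w. w \<in> space P \<Longrightarrow> M i w \<in> Mv i"
    and C_fin: "\<And>i. finite (Cv i)" and C_vals: "\<And>i w. w \<in> space P \<Longrightarrow> C i w \<in> Cv i"
    and grid0: "tg 0 = 0" and grid_mono: "strict_mono tg"
    and grid_unbounded: "filterlim tg at_top sequentially"
    and T_pos: "measure P {w \<in> space P. T w > 0} = 1"
    and T_pos_int: "measure (Pint a a') {w \<in> space P. T w > 0} = 1"
    and pos_int: "\<And>Q i nm nc mb cb. Q \<in> {Pint a a', Pint a a, Pint a' a'} \<Longrightarrow>
        nm \<in> {i, Suc i} \<Longrightarrow> nc \<in> {i, Suc i} \<Longrightarrow> nc \<le> nm \<Longrightarrow>
        hist_in Mv nm mb \<Longrightarrow> hist_in Cv nc cb \<Longrightarrow>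
        measure Q (histev (space P) T M C (tg i) nm nc mb cb) > 0"
    and pos_obs: "\<And>j i nm nc mb cb. j \<in> {a, a'} \<Longrightarrow>
        nm \<in> {i, Suc i} \<Longrightarrow> nc \<in> {i, Suc i} \<Longrightarrow> nc \<le> nm \<Longrightarrow>
        hist_in Mv nm mb \<Longrightarrow> hist_in Cv nc cb \<Longrightarrow>
        measure P (histev (space P) T M C (tg i) nm nc mb cb \<inter> {w \<in> space P. A w = j}) > 0"
    and P1: "\<And>j. j \<in> {a, a'} \<Longrightarrow> Pint j j = Pdo j"
    and A0: "\<And>j E. j \<in> {a, a'} \<Longrightarrow> E \<in> obs_events (space P) T M C \<Longrightarrow>
        measure (Pdo j) E = cprob P E {w \<in> space P. A w = j}"
    and A1: "\<And>i m mb cb. hist_in Mv i mb \<Longrightarrow> hist_in Cv i cb \<Longrightarrow>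
        cprob (Pint a a') {w \<in> space P. M i w = m} (histev (space P) T M C (tg i) i i mb cb)
      = cprob (Pint a' a') {w \<in> space P. M i w = m} (histev (space P) T M C (tg i) i i mb cb)"
    and A2: "\<And>i s mb cb. tg i < s \<Longrightarrow> s \<le> tg (Suc i) \<Longrightarrow>
        hist_in Mv (Suc i) mb \<Longrightarrow> hist_in Cv (Suc i) cb \<Longrightarrow>
        cprob (Pint a a') {w \<in> space P. T w > s} (histev (space P) T M C (tg i) (Suc i) (Suc i) mb cb)
      = cprob (Pint a a) {w \<in> space P. T w > s} (histev (space P) T M C (tg i) (Suc i) (Suc i) mb cb)"
    and A3: "\<And>i c mb cb. hist_in Mv (Suc i) mb \<Longrightarrow> hist_in Cv i cb \<Longrightarrow>
        cprob (Pint a a') {w \<in> space P. C i w = c} (histev (space P) T M C (tg i) (Suc i) i mb cb)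
      = cprob (Pint a a) {w \<in> space P. C i w = c} (histev (space P) T M C (tg i) (Suc i) i mb cb)"
    and rho_loc_int: "\<And>x y. set_integrable lborel {x..y} \<rho>"
    and lam_int: "\<And>i mb cb. hist_in Mv (Suc i) mb \<Longrightarrow> hist_in Cv (Suc i) cb \<Longrightarrow>
        set_integrable lborel {tg i..tg (Suc i)} (\<lambda>s. lam1 s mb cb)"
    and H1: "\<And>i t j mb cb. tg i \<le> t \<Longrightarrow> t \<le> tg (Suc i) \<Longrightarrow> j \<in> {a, a'} \<Longrightarrow>
        hist_in Mv (Suc i) mb \<Longrightarrow> hist_in Cv (Suc i) cb \<Longrightarrow>
        cprob P {w \<in> space P. T w > t}
          (histev (space P) T M C (tg i) (Suc i) (Suc i) mb cb \<inter> {w \<in> space P. A w = j})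
      = exp (- (LBINT s=tg i..t. \<rho> s * j + lam1 s mb cb))"
    and H2: "\<And>i c mb cb. hist_in Mv (Suc i) mb \<Longrightarrow> hist_in Cv i cb \<Longrightarrow>
        cprob P {w \<in> space P. C i w = c}
          (histev (space P) T M C (tg i) (Suc i) i mb cb \<inter> {w \<in> space P. A w = a})
      = cprob P {w \<in> space P. C i w = c}
          (histev (space P) T M C (tg i) (Suc i) i mb cb \<inter> {w \<in> space P. A w = a'})"
  shows "\<forall>t>0.
      measure (Pint a a') {w \<in> space P. T w > t}
        = exp (- (a - a') * (LBINT s=0..t. \<rho> s))
          * cprob P {w \<in> space P. T w > t} {w \<in> space P. A w = a'}
    \<and> measure (Pint a a') {w \<in> space P. T w > t} / measure (Pint a' a') {w \<in> space P. T w > t}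
        = exp ((a' - a) * (LBINT s=0..t. \<rho> s))
    \<and> measure (Pint a a) {w \<in> space P. T w > t} / measure (Pint a a') {w \<in> space P. T w > t}
        = exp ((a - a') * (LBINT s=0..t. \<rho> s))
          * cprob P {w \<in> space P. T w > t} {w \<in> space P. A w = a}
          / cprob P {w \<in> space P. T w > t} {w \<in> space P. A w = a'}"
proof -
  have arm_pos: "measure P {w \<in> space P. A w = j} > 0" if "j \<in> {a, a'}" for j
  proof -
    let ?G = "histev (space P) T M C (tg 0) 0 0 [] []"
    have "{w \<in> space P. A w = j} \<in> sets P"
      using measA by measurable
    then have "measure P (?G \<inter> {w \<in> space P. A w = j}) \<le> measure P {w \<in> space P. A w = j}"
      using probP by (intro finite_measure.finite_measure_mono prob_space.finite_measure) auto
    moreover have "measure P (?G \<inter> {w \<in> space P. A w = j}) > 0"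
      using that by (intro pos_obs) (auto simp: hist_in_def)
    ultimately show ?thesis
      by linarith
  qed
  interpret mediational_g_formula P Pint A T M C Mv Cv tg a a' \<rho> lam1
    using probP probInt setsInt measA measT measM measC M_fin M_vals C_fin C_vals
      grid0 grid_mono grid_unbounded T_pos T_pos_int arm_pos A1 A2 A3 rho_loc_int lam_int H1 H2
    by (intro mediational_g_formula.intro) (simp_all add: A0 P1 pos_int)
  show ?thesis
    using survival_effects by blast
qed

end
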